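(* Let $G=(V,E)$ be a directed graph whose edges are given on the external tape of a RATM-BIO as adjacency lists. Then the worst-case external access trace complexity of the DFS-Random Access algorithm (described in the context) executed on a RATM-BIO is $O(|V||E|)$.
   Context: A RATM-BIO (random access Turing machine with blocking IO) has a main memory tape with its address tape and an external memory tape with its address tape; a main head with random access on the main tape (jumping in one step to the cell whose index is on the main address tape when entering a random access state) and an external head that moves only one cell at a time on the external tape. Transitions are main memory computation transitions (main head moves, external head halts), external memory access transitions (external head moves one step, main head halts), and read/write transitions: on entering a read (write) state an external address is written, the main head halts and the external head moves step by step to the designated external cell; when reached, the content of that cell replaces (is replaced by) the content of the main memory cell under the main head, and main memory computation resumes. The external access trace complexity is the total number of moves of the external head. Semi-external setting: main memory has size $O(|V|)$; it holds an array $free[\cdot]$ indexed by vertices and a stack. DFS-Random Access algorithm: set $free[u]=1$ for all vertices $u$; for each vertex $u$: push $u$ on an empty stack; while the stack is nonempty, pop $v$; if $free[v]=1$, set $free[v]=0$ and, for each neighbor $w$ of $v$ (its adjacency list read from the external tape, in whatever order vertices are processed), if $free[w]=1$ push $w$. *)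

theory Defs
  imports Main
begin

text \<open>
  A directed graph G = (V,E) with V = {0..<n} is given by its adjacency
  lists adj :: nat list list (length adj = n; adj ! v lists the out-neighbours of v).
  The external tape stores the adjacency lists consecutively, list of vertex 0 first,
  one edge (neighbour) per cell; cell indices start at 0.  The list of v occupies the
  cells ext_start adj v, ..., ext_start adj v + length (adj ! v) - 1.
\<close>

definition num_edges :: "nat list list \<Rightarrow> nat" where
  "num_edges adj = sum_list (map length adj)"

definition ext_start :: "nat list list \<Rightarrow> nat \<Rightarrow> nat" where
  "ext_start adj v = sum_list (map length (take v adj))"

text \<open>External cells read (one read transition each) when scanning the list of v.\<close>
definition ext_cells :: "nat list list \<Rightarrow> nat \<Rightarrow> nat list" where
  "ext_cells adj v = map (\<lambda>i. ext_start adj v + i) [0..<length (adj ! v)]"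

definition free_count :: "bool list \<Rightarrow> nat" where
  "free_count fr = card {i. i < length fr \<and> fr ! i}"

lemma free_count_update_less:
  assumes "v < length fr" "fr ! v"
  shows "free_count (fr[v := False]) < free_count fr"
proof -
  have "{i. i < length (fr[v := False]) \<and> fr[v := False] ! i}
        \<subset> {i. i < length fr \<and> fr ! i}"
    using assms by (auto simp: nth_list_update split: if_splits)
  then show ?thesis unfolding free_count_def
    by (intro psubset_card_mono) auto
qed

text \<open>
  The inner loop of DFS-Random Access: state = array free[.] (as bool list) and stack.
\<close>
function dfs_loop :: "nat list list \<Rightarrow> bool list \<Rightarrow> nat list \<Rightarrow> bool list \<times> nat list" where
  "dfs_loop adj fr [] = (fr, [])"
| "dfs_loop adj fr (v # st) =
     (if v < length fr \<and> fr ! v then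
        (let fr1 = fr[v := False];
             ws = filter (\<lambda>w. w < length fr1 \<and> fr1 ! w) (adj ! v);
             (fr2, tr) = dfs_loop adj fr1 (rev ws @ st)
         in (fr2, ext_cells adj v @ tr))
      else dfs_loop adj fr st)"
  by pat_completeness auto
termination
  by (relation "measures [\<lambda>(adj, fr, st). free_count fr, \<lambda>(adj, fr, st). length st]")
     (auto simp: free_count_update_less)

definition dfs_trace :: "nat list list \<Rightarrow> nat list" where
  "dfs_trace adj =
     snd (foldl (\<lambda>(fr, tr) u. let (fr', tr') = dfs_loop adj fr [u] in (fr', tr @ tr'))
                (replicate (length adj) True, []) [0..<length adj])"

text \<open>Number of moves of the external head (starting at cell 0) visiting the given
  cells in order; the head moves one cell per step.\<close>
fun head_moves :: "nat \<Rightarrow> nat list \<Rightarrow> nat" where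
  "head_moves h [] = 0"
| "head_moves h (a # as) = (if h \<le> a then a - h else h - a) + head_moves a as"

definition ext_access_trace_complexity :: "nat list list \<Rightarrow> nat" where
  "ext_access_trace_complexity adj = head_moves 0 (dfs_trace adj)"

end

theory Submission
  imports Defs
begin

text \<open>
  Each vertex is freed at most once, and only when it is freed is its adjacency list
  read; so the external trace is the concatenation of at most \<open>|V|\<close> scans of
  adjacency lists.  A scan reads an interval of consecutive cells inside \<open>[0, |E|)\<close>,
  so the head needs at most \<open>|E|\<close> moves to reach its first cell and at most \<open>|E|\<close>
  moves to run through it.  Hence the head moves at most \<open>2 |V| |E|\<close> times.
\<close>

lemma head_moves_append:
  "head_moves h (xs @ ys) = head_moves h xs + head_moves (if xs = [] then h else last xs) ys"
  by (induction xs arbitrary: h) auto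

lemma head_moves_sorted:
  "sorted (a # as) \<Longrightarrow> head_moves a as = last (a # as) - a"
proof (induction as arbitrary: a)
  case (Cons b bs)
  then have "a \<le> b" "b \<le> last (b # bs)"
    by (auto simp: last_in_set)
  with Cons show ?case
    by simp
qed simp

lemma head_moves_sorted_le:
  assumes "sorted xs" "h \<le> m" "\<forall>a\<in>set xs. a \<le> m"
  shows "head_moves h xs \<le> 2 * m"
proof (cases xs)
  case (Cons a as)
  have "a \<le> last xs" "last xs \<le> m"
    using Cons assms(1,3) last_in_set by (auto simp: sorted_wrt_append)
  moreover have "head_moves h xs = (if h \<le> a then a - h else h - a) + (last xs - a)"
    using Cons assms(1) head_moves_sorted[of a as] by simp
  ultimately show ?thesis
    using assms(2) by auto
qed simp

lemma head_moves_concat_sorted_le: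
  assumes "\<forall>xs\<in>set xss. sorted xs \<and> (\<forall>a\<in>set xs. a \<le> m)" "h \<le> m"
  shows "head_moves h (concat xss) \<le> length xss * (2 * m)"
  using assms
proof (induction xss arbitrary: h)
  case (Cons xs xss)
  let ?h' = "if xs = [] then h else last xs"
  have "?h' \<le> m"
    using Cons.prems last_in_set by auto
  then have "head_moves ?h' (concat xss) \<le> length xss * (2 * m)"
    using Cons by simp
  moreover have "head_moves h xs \<le> 2 * m"
    using Cons.prems by (intro head_moves_sorted_le) auto
  ultimately show ?case
    by (simp add: head_moves_append)
qed simp

lemma ext_cells_eq_upt:
  "ext_cells adj v = [ext_start adj v..<ext_start adj v + length (adj ! v)]"
  unfolding ext_cells_def by (rule nth_equalityI) auto

lemma ext_start_add_length_le:
  assumes "v < length adj"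
  shows "ext_start adj v + length (adj ! v) \<le> num_edges adj"
proof -
  have "ext_start adj v + length (adj ! v) = sum_list (map length (take (Suc v) adj))"
    using assms by (simp add: ext_start_def take_Suc_conv_app_nth)
  also have "\<dots> \<le> sum_list (map length (take (Suc v) adj @ drop (Suc v) adj))"
    unfolding map_append sum_list_append by simp
  also have "\<dots> = num_edges adj"
    by (simp only: append_take_drop_id num_edges_def)
  finally show ?thesis .
qed

lemma ext_cells_less_num_edges:
  "v < length adj \<Longrightarrow> a \<in> set (ext_cells adj v) \<Longrightarrow> a < num_edges adj"
  using ext_start_add_length_le[of v adj] by (auto simp: ext_cells_eq_upt)

lemma sorted_ext_cells: "sorted (ext_cells adj v)"
  by (simp add: ext_cells_eq_upt)

definition scans_at_most :: "nat list list \<Rightarrow> nat \<Rightarrow> nat list \<Rightarrow> bool" where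
  "scans_at_most adj k tr \<longleftrightarrow>
     (\<exists>vs. tr = concat (map (ext_cells adj) vs) \<and> set vs \<subseteq> {..<length adj} \<and> length vs \<le> k)"

lemma scans_at_most_Nil: "scans_at_most adj k []"
  unfolding scans_at_most_def by (intro exI[of _ "[]"]) simp

lemma scans_at_most_mono:
  "scans_at_most adj k tr \<Longrightarrow> k \<le> l \<Longrightarrow> scans_at_most adj l tr"
  unfolding scans_at_most_def by auto

lemma scans_at_most_append:
  assumes "scans_at_most adj k tr" "scans_at_most adj l tr'"
  shows "scans_at_most adj (k + l) (tr @ tr')"
proof -
  obtain vs ws where
    "tr = concat (map (ext_cells adj) vs)" "set vs \<subseteq> {..<length adj}" "length vs \<le> k"
    "tr' = concat (map (ext_cells adj) ws)" "set ws \<subseteq> {..<length adj}" "length ws \<le> l"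
    using assms unfolding scans_at_most_def by blast
  then show ?thesis
    unfolding scans_at_most_def by (intro exI[of _ "vs @ ws"]) auto
qed

lemma scans_at_most_ext_cells_Cons:
  "v < length adj \<Longrightarrow> scans_at_most adj k tr \<Longrightarrow> scans_at_most adj (Suc k) (ext_cells adj v @ tr)"
  using scans_at_most_append[of adj 1 "ext_cells adj v" k tr]
  unfolding scans_at_most_def by (force intro: exI[of _ "[v]"])

lemma head_moves_scans_at_most:
  assumes "scans_at_most adj k tr"
  shows "head_moves 0 tr \<le> k * (2 * num_edges adj)"
proof -
  obtain vs where vs: "tr = concat (map (ext_cells adj) vs)" "set vs \<subseteq> {..<length adj}"
    "length vs \<le> k"
    using assms unfolding scans_at_most_def by blast
  have "head_moves 0 tr \<le> length (map (ext_cells adj) vs) * (2 * num_edges adj)"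
    unfolding vs(1) using vs(2)
    by (intro head_moves_concat_sorted_le)
       (auto simp: sorted_ext_cells intro: less_imp_le ext_cells_less_num_edges)
  also have "\<dots> \<le> k * (2 * num_edges adj)"
    using vs(3) by simp
  finally show ?thesis .
qed

lemma free_count_le_length: "free_count fr \<le> length fr"
  unfolding free_count_def by (rule card_mono[of "{..<length fr}", simplified]) auto

lemma free_count_replicate_True: "free_count (replicate n True) = n"
proof -
  have "{i. i < n \<and> replicate n True ! i} = {..<n}"
    by auto
  then show ?thesis
    by (simp add: free_count_def)
qed

lemma dfs_loop_scans_freed:
  assumes "dfs_loop adj fr st = (fr', tr)" "length fr = length adj"
  shows "length fr' = length fr \<and> free_count fr' \<le> free_count fr \<and>
         scans_at_most adj (free_count fr - free_count fr') tr"
  using assms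
proof (induction adj fr st arbitrary: fr' tr rule: dfs_loop.induct)
  case (1 adj fr)
  then show ?case by (simp add: scans_at_most_Nil)
next
  case (2 adj fr v st)
  show ?case
  proof (cases "v < length fr \<and> fr ! v")
    case True
    define fr1 where "fr1 = fr[v := False]"
    define ws where "ws = filter (\<lambda>w. w < length fr1 \<and> fr1 ! w) (adj ! v)"
    obtain fr2 tr2 where rec: "dfs_loop adj fr1 (rev ws @ st) = (fr2, tr2)"
      by fastforce
    have "fr' = fr2" "tr = ext_cells adj v @ tr2"
      using "2.prems"(1) True rec by (simp_all add: fr1_def ws_def Let_def)
    moreover have "length fr2 = length fr1" "free_count fr2 \<le> free_count fr1"
      "scans_at_most adj (free_count fr1 - free_count fr2) tr2"
      using "2.IH"(1)[OF True fr1_def ws_def rec] "2.prems"(2) by (simp_all add: fr1_def)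
    moreover have "free_count fr1 < free_count fr"
      unfolding fr1_def using True by (intro free_count_update_less) auto
    ultimately show ?thesis
      using True "2.prems"(2)
      by (auto simp: fr1_def intro: scans_at_most_mono scans_at_most_ext_cells_Cons)
  next
    case False
    then have "dfs_loop adj fr st = (fr', tr)"
      using "2.prems"(1) by (metis dfs_loop.simps(2))
    then show ?thesis
      using "2.IH"(2)[OF False] "2.prems"(2) by blast
  qed
qed

lemma dfs_trace_scans_at_most: "scans_at_most adj (length adj) (dfs_trace adj)"
proof -
  let ?step = "\<lambda>(fr, tr) u. let (fr', tr') = dfs_loop adj fr [u] in (fr', tr @ tr')"
  let ?inv = "\<lambda>(fr, tr). length fr = length adj \<and> scans_at_most adj (length adj - free_count fr) tr"
  have "?inv (foldl ?step s us)" if "?inv s" for s us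
    using that
  proof (induction us arbitrary: s)
    case (Cons u us)
    obtain fr tr fr' tr' where s: "s = (fr, tr)" and rec: "dfs_loop adj fr [u] = (fr', tr')"
      by (metis prod.exhaust)
    have fr: "length fr = length adj" "scans_at_most adj (length adj - free_count fr) tr"
      using Cons.prems s by simp_all
    have fr': "length fr' = length fr" "free_count fr' \<le> free_count fr"
      "scans_at_most adj (free_count fr - free_count fr') tr'"
      using dfs_loop_scans_freed[OF rec fr(1)] by simp_all
    have "length adj - free_count fr + (free_count fr - free_count fr') = length adj - free_count fr'"
      using fr'(2) free_count_le_length[of fr] fr(1) by linarith
    then have "scans_at_most adj (length adj - free_count fr') (tr @ tr')"
      using scans_at_most_append[OF fr(2) fr'(3)] by simp
    then have "?inv (?step s u)"
      using s rec fr fr' by simp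
    then show ?case
      using Cons.IH by simp
  qed simp
  from this[of "(replicate (length adj) True, [])" "[0..<length adj]"]
  show ?thesis
    unfolding dfs_trace_def
    by (auto simp: free_count_replicate_True scans_at_most_Nil intro: scans_at_most_mono
             split: prod.splits)
qed

theorem theorem7:
  shows "\<exists>C::nat. \<forall>adj :: nat list list.
           (\<forall>xs \<in> set adj. distinct xs \<and> (\<forall>w \<in> set xs. w < length adj)) \<longrightarrow>
           ext_access_trace_complexity adj \<le> C * length adj * num_edges adj"
proof (intro exI[of _ 2] allI impI)
  fix adj :: "nat list list"
  have "ext_access_trace_complexity adj \<le> length adj * (2 * num_edges adj)"
    unfolding ext_access_trace_complexity_def
    using dfs_trace_scans_at_most by (rule head_moves_scans_at_most)
  then show "ext_access_trace_complexity adj \<le> 2 * length adj * num_edges adj"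
    by (simp add: ac_simps)
qed

end
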